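(* For every $n\ge4$, a relation on $\mathcal P$ is $\Sigma_n$-definable in $\mathbf Y^*=\langle\mathcal P,\le,[1]+[1]\rangle$ if and only if it is $\Sigma_n$-definable in $\langle\mathcal P,\le,\pi:\pi\in\mathcal P\rangle$.
   Context: $\mathcal P$ is the set of all integer partitions, including the empty partition; a partition is a nonincreasing finite sequence of positive integers. Young's lattice $\mathbf Y=\langle\mathcal P,\le\rangle$ has $(s_1,\dots,s_r)\le(n_1,\dots,n_t)$ iff $r\le t$ and $s_i\le n_i$ for all $i\le r$; $\mathbf Y^*$ is $\mathbf Y$ with a constant symbol for the partition $(1,1)$, and $\langle\mathcal P,\le,\pi:\pi\in\mathcal P\rangle$ is $\mathbf Y$ expanded by a constant symbol for every partition. A relation is $\Sigma_n$-definable in a structure if it is defined by a first-order formula in the structure's language in prenex form with $n$ alternating quantifier blocks, the outermost existential, and a quantifier-free matrix. *)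

theory Defs
  imports Main
begin

definition is_partition :: "nat list \<Rightarrow> bool" where
  "is_partition p \<longleftrightarrow> sorted_wrt (\<ge>) p \<and> (\<forall>x\<in>set p. 0 < x)"

definition Partitions :: "nat list set" where
  "Partitions = {p. is_partition p}"

definition young_le :: "nat list \<Rightarrow> nat list \<Rightarrow> bool" where
  "young_le s t \<longleftrightarrow> length s \<le> length t \<and> (\<forall>i<length s. s ! i \<le> t ! i)"

datatype 'c trm = Var nat | Cst 'c

datatype 'c fm =
    Le "'c trm" "'c trm"
  | Eq "'c trm" "'c trm"
  | Neg "'c fm"
  | Conj "'c fm" "'c fm"
  | Disj "'c fm" "'c fm"
  | Ex nat "'c fm"
  | All nat "'c fm"

fun tval :: "('c \<Rightarrow> nat list) \<Rightarrow> (nat \<Rightarrow> nat list) \<Rightarrow> 'c trm \<Rightarrow> nat list" where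
  "tval I e (Var i) = e i"
| "tval I e (Cst c) = I c"

fun sat :: "('c \<Rightarrow> nat list) \<Rightarrow> (nat \<Rightarrow> nat list) \<Rightarrow> 'c fm \<Rightarrow> bool" where
  "sat I e (Le s t) = young_le (tval I e s) (tval I e t)"
| "sat I e (Eq s t) = (tval I e s = tval I e t)"
| "sat I e (Neg f) = (\<not> sat I e f)"
| "sat I e (Conj f g) = (sat I e f \<and> sat I e g)"
| "sat I e (Disj f g) = (sat I e f \<or> sat I e g)"
| "sat I e (Ex x f) = (\<exists>p\<in>Partitions. sat I (e(x := p)) f)"
| "sat I e (All x f) = (\<forall>p\<in>Partitions. sat I (e(x := p)) f)"

fun tvars :: "'c trm \<Rightarrow> nat set" where
  "tvars (Var i) = {i}"
| "tvars (Cst c) = {}"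

fun trm_consts :: "'c trm \<Rightarrow> 'c set" where
  "trm_consts (Var i) = {}"
| "trm_consts (Cst c) = {c}"

fun fv :: "'c fm \<Rightarrow> nat set" where
  "fv (Le s t) = tvars s \<union> tvars t"
| "fv (Eq s t) = tvars s \<union> tvars t"
| "fv (Neg f) = fv f"
| "fv (Conj f g) = fv f \<union> fv g"
| "fv (Disj f g) = fv f \<union> fv g"
| "fv (Ex x f) = fv f - {x}"
| "fv (All x f) = fv f - {x}"

fun fm_consts :: "'c fm \<Rightarrow> 'c set" where
  "fm_consts (Le s t) = trm_consts s \<union> trm_consts t"
| "fm_consts (Eq s t) = trm_consts s \<union> trm_consts t"
| "fm_consts (Neg f) = fm_consts f"
| "fm_consts (Conj f g) = fm_consts f \<union> fm_consts g"
| "fm_consts (Disj f g) = fm_consts f \<union> fm_consts g"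
| "fm_consts (Ex x f) = fm_consts f"
| "fm_consts (All x f) = fm_consts f"

fun qfree :: "'c fm \<Rightarrow> bool" where
  "qfree (Le s t) = True"
| "qfree (Eq s t) = True"
| "qfree (Neg f) = qfree f"
| "qfree (Conj f g) = (qfree f \<and> qfree g)"
| "qfree (Disj f g) = (qfree f \<and> qfree g)"
| "qfree (Ex x f) = False"
| "qfree (All x f) = False"

definition Exs :: "nat list \<Rightarrow> 'c fm \<Rightarrow> 'c fm" where
  "Exs xs f = foldr Ex xs f"

definition Alls :: "nat list \<Rightarrow> 'c fm \<Rightarrow> 'c fm" where
  "Alls xs f = foldr All xs f"

fun is_sigma :: "nat \<Rightarrow> 'c fm \<Rightarrow> bool"
and is_pi :: "nat \<Rightarrow> 'c fm \<Rightarrow> bool" where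
  "is_sigma 0 f = qfree f"
| "is_pi 0 f = qfree f"
| "is_sigma (Suc n) f = (\<exists>xs g. f = Exs xs g \<and> is_pi n g)"
| "is_pi (Suc n) f = (\<exists>xs g. f = Alls xs g \<and> is_sigma n g)"

definition sigma_definable ::
  "('c \<Rightarrow> nat list) \<Rightarrow> 'c set \<Rightarrow> nat \<Rightarrow> nat \<Rightarrow> nat list list set \<Rightarrow> bool" where
  "sigma_definable I C n k R \<longleftrightarrow>
     (\<exists>\<phi>. is_sigma n \<phi> \<and> fm_consts \<phi> \<subseteq> C \<and> fv \<phi> \<subseteq> {..<k} \<and>
        (\<forall>e. (\<forall>i. e i \<in> Partitions) \<longrightarrow> (sat I e \<phi> \<longleftrightarrow> map e [0..<k] \<in> R)))"

text \<open>Y*: one constant symbol interpreted as (1,1).\<close>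
definition I_Ystar :: "unit \<Rightarrow> nat list" where
  "I_Ystar _ = [1, 1]"

end

theory Submission
  imports Defs
begin

text \<open>Every partition is definable in Young's lattice from \<open>(1,1)\<close> by an \<open>\<exists>\<forall>\<close>-formula. Rows are
  the partitions not above \<open>(1,1)\<close>, and the row \<open>(m)\<close> is the one whose ideal has exactly \<open>m + 1\<close>
  elements; columns are singled out in the same way among the partitions not above \<open>(2)\<close>. The
  rectangle with \<open>b\<close> rows of length \<open>a\<close> is the largest partition above neither the row
  \<open>(a + 1)\<close> nor the column of height \<open>b + 1\<close>, and an arbitrary partition \<open>p\<close> is the largest
  partition above none of the rectangles \<open>(i + 1) \<times> (p\<^sub>i + 1)\<close> and the column of height
  \<open>length p + 1\<close>.

  A constant \<open>c\<close> of a \<open>\<Sigma>\<^sub>n\<close>-formula with \<open>n \<ge> 2\<close> can be replaced by a fresh variable \<open>x\<close>,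
  quantified existentially together with the \<open>\<exists>\<forall>\<close>-definition of \<open>c\<close> in \<open>x\<close>; the two quantifier
  blocks of the definition merge into the first two blocks of the formula. Eliminating general
  partitions, then rectangles, columns and rows in turn leaves \<open>(1,1)\<close> as the only constant.
  Hence the equivalence holds for every \<open>n \<ge> 2\<close> and every relation \<open>R\<close>.\<close>

section \<open>Formulas\<close>

abbreviation partition_env :: "(nat \<Rightarrow> nat list) \<Rightarrow> bool" where
  "partition_env e \<equiv> \<forall>i. e i \<in> Partitions"

lemma Nil_in_Partitions: "[] \<in> Partitions"
  by (simp add: Partitions_def is_partition_def)

fun bv :: "'c fm \<Rightarrow> nat set" where
  "bv (Le s t) = {}"
| "bv (Eq s t) = {}"
| "bv (Neg f) = bv f"
| "bv (Conj f g) = bv f \<union> bv g"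
| "bv (Disj f g) = bv f \<union> bv g"
| "bv (Ex x f) = insert x (bv f)"
| "bv (All x f) = insert x (bv f)"

text \<open>Rewriting the term functions into case expressions lets \<open>split: trm.split\<close> treat both
  kinds of atoms at once.\<close>

lemma trm_case_eqs:
  "tval I e t = (case t of Var i \<Rightarrow> e i | Cst c \<Rightarrow> I c)"
  "tvars t = (case t of Var i \<Rightarrow> {i} | Cst c \<Rightarrow> {})"
  "trm_consts t = (case t of Var i \<Rightarrow> {} | Cst c \<Rightarrow> {c})"
  "map_trm g t = (case t of Var i \<Rightarrow> Var i | Cst c \<Rightarrow> Cst (g c))"
  by (cases t; simp)+

lemma finite_fv: "finite (fv f)"
  by (induction f) (auto simp: trm_case_eqs split: trm.split)

lemma finite_bv: "finite (bv f)"
  by (induction f) auto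

lemma finite_fm_consts: "finite (fm_consts f)"
  by (induction f) (auto simp: trm_case_eqs split: trm.split)

lemma sat_cong: "\<forall>i\<in>fv f. e i = e' i \<Longrightarrow> sat I e f = sat I e' f"
proof (induction f arbitrary: e e')
  case (Ex x f)
  have "sat I (e(x := p)) f = sat I (e'(x := p)) f" for p by (rule Ex.IH) (use Ex.prems in auto)
  then show ?case by simp
next
  case (All x f)
  have "sat I (e(x := p)) f = sat I (e'(x := p)) f" for p by (rule All.IH) (use All.prems in auto)
  then show ?case by simp
qed (auto simp: trm_case_eqs ball_Un split: trm.split)

lemma sat_consts_cong: "\<forall>c\<in>fm_consts f. I c = I' c \<Longrightarrow> sat I e f = sat I' e f"
  by (induction f arbitrary: e) (auto simp: trm_case_eqs split: trm.split)

lemma sat_map_fm: "sat I e (map_fm g f) = sat (I \<circ> g) e f"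
  by (induction f arbitrary: e) (auto simp: trm_case_eqs split: trm.split)

lemma fv_map_fm [simp]: "fv (map_fm g f) = fv f"
  by (induction f) (auto simp: trm_case_eqs split: trm.split)

lemma fm_consts_map_fm [simp]: "fm_consts (map_fm g f) = g ` fm_consts f"
  by (induction f) (auto simp: trm_case_eqs split: trm.split)

lemma qfree_map_fm [simp]: "qfree (map_fm g f) = qfree f"
  by (induction f) auto

lemma Exs_simps [simp]: "Exs [] f = f" "Exs (x # xs) f = Ex x (Exs xs f)"
  by (simp_all add: Exs_def)

lemma Alls_simps [simp]: "Alls [] f = f" "Alls (x # xs) f = All x (Alls xs f)"
  by (simp_all add: Alls_def)

lemma Exs_append: "Exs (xs @ ys) f = Exs xs (Exs ys f)"
  by (induction xs) auto

lemma Alls_append: "Alls (xs @ ys) f = Alls xs (Alls ys f)"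
  by (induction xs) auto

lemma fv_Exs [simp]: "fv (Exs xs f) = fv f - set xs"
  by (induction xs) auto

lemma fv_Alls [simp]: "fv (Alls xs f) = fv f - set xs"
  by (induction xs) auto

lemma bv_Exs [simp]: "bv (Exs xs f) = bv f \<union> set xs"
  by (induction xs) auto

lemma bv_Alls [simp]: "bv (Alls xs f) = bv f \<union> set xs"
  by (induction xs) auto

lemma fm_consts_Exs [simp]: "fm_consts (Exs xs f) = fm_consts f"
  by (induction xs) auto

lemma fm_consts_Alls [simp]: "fm_consts (Alls xs f) = fm_consts f"
  by (induction xs) auto

lemma sat_Exs:
  "sat I e (Exs xs f) \<longleftrightarrow>
     (\<exists>e'. (\<forall>i. i \<notin> set xs \<longrightarrow> e' i = e i) \<and> (\<forall>i\<in>set xs. e' i \<in> Partitions) \<and> sat I e' f)"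
proof (induction xs arbitrary: e)
  case Nil
  have "(\<forall>i. e' i = e i) \<longleftrightarrow> e' = e" for e' :: "nat \<Rightarrow> nat list" by auto
  then show ?case by simp
next
  case (Cons x xs)
  show ?case
  proof
    assume "sat I e (Exs (x # xs) f)"
    then obtain p e' where "p \<in> Partitions" "\<forall>i. i \<notin> set xs \<longrightarrow> e' i = (e(x := p)) i"
      "\<forall>i\<in>set xs. e' i \<in> Partitions" "sat I e' f"
      using Cons.IH by auto
    then show "\<exists>e'. (\<forall>i. i \<notin> set (x # xs) \<longrightarrow> e' i = e i) \<and>
        (\<forall>i\<in>set (x # xs). e' i \<in> Partitions) \<and> sat I e' f"
      by (intro exI[of _ e']) (auto split: if_splits)
  next
    assume "\<exists>e'. (\<forall>i. i \<notin> set (x # xs) \<longrightarrow> e' i = e i) \<and>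
        (\<forall>i\<in>set (x # xs). e' i \<in> Partitions) \<and> sat I e' f"
    then obtain e' where e': "\<forall>i. i \<notin> set (x # xs) \<longrightarrow> e' i = e i"
      "\<forall>i\<in>set (x # xs). e' i \<in> Partitions" "sat I e' f"
      by blast
    have "sat I (e(x := e' x)) (Exs xs f)"
      unfolding Cons.IH using e' by (intro exI[of _ e']) auto
    then show "sat I e (Exs (x # xs) f)" using e' by auto
  qed
qed

lemma sat_Exs_upt:
  "sat I e (Exs [a..<a + k] f) \<longleftrightarrow>
     (\<exists>g. (\<forall>j<k. g j \<in> Partitions) \<and>
          sat I (\<lambda>i. if a \<le> i \<and> i < a + k then g (i - a) else e i) f)"
proof
  assume "sat I e (Exs [a..<a + k] f)"
  then obtain e' where e': "\<forall>i. i \<notin> {a..<a + k} \<longrightarrow> e' i = e i"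
    "\<forall>i\<in>{a..<a + k}. e' i \<in> Partitions" "sat I e' f"
    unfolding sat_Exs by auto
  have "(\<lambda>i. if a \<le> i \<and> i < a + k then e' (a + (i - a)) else e i) = e'"
    using e'(1) by auto
  with e' show "\<exists>g. (\<forall>j<k. g j \<in> Partitions) \<and>
      sat I (\<lambda>i. if a \<le> i \<and> i < a + k then g (i - a) else e i) f"
    by (intro exI[of _ "\<lambda>j. e' (a + j)"]) auto
next
  assume "\<exists>g. (\<forall>j<k. g j \<in> Partitions) \<and>
      sat I (\<lambda>i. if a \<le> i \<and> i < a + k then g (i - a) else e i) f"
  then obtain g where "\<forall>j<k. g j \<in> Partitions"
    "sat I (\<lambda>i. if a \<le> i \<and> i < a + k then g (i - a) else e i) f"
    by blast
  then show "sat I e (Exs [a..<a + k] f)"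
    unfolding sat_Exs by (intro exI[of _ "\<lambda>i. if a \<le> i \<and> i < a + k then g (i - a) else e i"]) auto
qed

lemma Exs_cong: "(\<And>e. sat I e A = sat I e B) \<Longrightarrow> sat I e (Exs xs A) = sat I e (Exs xs B)"
  by (induction xs arbitrary: e) auto

lemma Alls_cong: "(\<And>e. sat I e A = sat I e B) \<Longrightarrow> sat I e (Alls xs A) = sat I e (Alls xs B)"
  by (induction xs arbitrary: e) auto

lemma sat_Conj_Exs:
  assumes "set xs \<inter> fv A = {}"
  shows "sat I e (Conj A (Exs xs B)) \<longleftrightarrow> sat I e (Exs xs (Conj A B))"
  using assms
proof (induction xs arbitrary: e)
  case (Cons x xs)
  have "sat I (e(x := p)) A = sat I e A" for p by (rule sat_cong) (use Cons.prems in auto)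
  with Cons show ?case by auto
qed simp

lemma sat_Conj_Alls:
  assumes "set xs \<inter> fv A = {}"
  shows "sat I e (Conj A (Alls xs B)) \<longleftrightarrow> sat I e (Alls xs (Conj A B))"
  using assms
proof (induction xs arbitrary: e)
  case (Cons x xs)
  have "sat I (e(x := p)) A = sat I e A" for p by (rule sat_cong) (use Cons.prems in auto)
  with Cons show ?case using Nil_in_Partitions by auto
qed simp

lemma sat_Conj_Exs_left:
  "set xs \<inter> fv A = {} \<Longrightarrow> sat I e (Conj (Exs xs B) A) \<longleftrightarrow> sat I e (Exs xs (Conj B A))"
  using sat_Conj_Exs[of xs A I e B] Exs_cong[of I "Conj A B" "Conj B A" e xs] by auto

lemma sat_Conj_Alls_left:
  "set xs \<inter> fv A = {} \<Longrightarrow> sat I e (Conj (Alls xs B) A) \<longleftrightarrow> sat I e (Alls xs (Conj B A))"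
  using sat_Conj_Alls[of xs A I e B] Alls_cong[of I "Conj A B" "Conj B A" e xs] by auto

fun push :: "'c fm \<Rightarrow> 'c fm \<Rightarrow> 'c fm" where
  "push t (Ex x f) = Ex x (push t f)"
| "push t (All x f) = All x (push t f)"
| "push t f = Conj t f"

lemma sat_push: "fv t \<inter> bv f = {} \<Longrightarrow> sat I e (push t f) = (sat I e t \<and> sat I e f)"
proof (induction t f arbitrary: e rule: push.induct)
  case (1 t x f)
  have "sat I (e(x := p)) t = sat I e t" for p by (rule sat_cong) (use 1 in auto)
  with 1 show ?case by auto
next
  case (2 t x f)
  have "sat I (e(x := p)) t = sat I e t" for p by (rule sat_cong) (use 2 in auto)
  with 2 show ?case using Nil_in_Partitions by auto
qed auto

lemma fv_push: "fv (push t f) \<subseteq> fv t \<union> fv f"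
  by (induction t f rule: push.induct) auto

lemma fm_consts_push: "fm_consts (push t f) = fm_consts t \<union> fm_consts f"
  by (induction t f rule: push.induct) auto

lemma sat_prenex_Conj:
  assumes "(set us \<union> set ws) \<inter> fv h = {}" and "(set xs \<union> set zs \<union> bv h) \<inter> fv \<theta> = {}"
  shows "sat I e (Exs (us @ xs) (Alls (ws @ zs) (push \<theta> h))) \<longleftrightarrow>
    sat I e (Exs us (Alls ws \<theta>)) \<and> sat I e (Exs xs (Alls zs h))"
proof -
  have "sat I e (Exs us (Alls ws \<theta>)) \<and> sat I e (Exs xs (Alls zs h)) \<longleftrightarrow>
      sat I e (Exs us (Conj (Alls ws \<theta>) (Exs xs (Alls zs h))))"
    using assms(1) by (subst sat_Conj_Exs_left[symmetric]) auto
  also have "\<dots> \<longleftrightarrow> sat I e (Exs us (Exs xs (Conj (Alls ws \<theta>) (Alls zs h))))"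
    using assms(2) by (intro Exs_cong sat_Conj_Exs) auto
  also have "\<dots> \<longleftrightarrow> sat I e (Exs us (Exs xs (Alls ws (Conj \<theta> (Alls zs h)))))"
    using assms(1) by (intro Exs_cong sat_Conj_Alls_left) auto
  also have "\<dots> \<longleftrightarrow> sat I e (Exs us (Exs xs (Alls ws (Alls zs (Conj \<theta> h)))))"
    using assms(2) by (intro Exs_cong Alls_cong sat_Conj_Alls) auto
  also have "\<dots> \<longleftrightarrow> sat I e (Exs us (Exs xs (Alls ws (Alls zs (push \<theta> h)))))"
    using assms(2) by (intro Exs_cong Alls_cong) (simp add: sat_push Int_commute Int_Un_distrib)
  finally show ?thesis by (simp add: Exs_append Alls_append)
qed

fun subst_cst_trm :: "'c \<Rightarrow> nat \<Rightarrow> 'c trm \<Rightarrow> 'c trm" where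
  "subst_cst_trm c y (Var i) = Var i"
| "subst_cst_trm c y (Cst d) = (if d = c then Var y else Cst d)"

fun subst_cst :: "'c \<Rightarrow> nat \<Rightarrow> 'c fm \<Rightarrow> 'c fm" where
  "subst_cst c y (Le s t) = Le (subst_cst_trm c y s) (subst_cst_trm c y t)"
| "subst_cst c y (Eq s t) = Eq (subst_cst_trm c y s) (subst_cst_trm c y t)"
| "subst_cst c y (Neg f) = Neg (subst_cst c y f)"
| "subst_cst c y (Conj f g) = Conj (subst_cst c y f) (subst_cst c y g)"
| "subst_cst c y (Disj f g) = Disj (subst_cst c y f) (subst_cst c y g)"
| "subst_cst c y (Ex x f) = Ex x (subst_cst c y f)"
| "subst_cst c y (All x f) = All x (subst_cst c y f)"

lemma sat_subst_cst: "e y = I c \<Longrightarrow> y \<notin> bv f \<Longrightarrow> sat I e (subst_cst c y f) = sat I e f"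
  by (induction f arbitrary: e) (auto simp: trm_case_eqs split: trm.split)

lemma fv_subst_cst: "fv (subst_cst c y f) \<subseteq> insert y (fv f)"
  by (induction f) (auto simp: trm_case_eqs split: trm.split)

lemma bv_subst_cst [simp]: "bv (subst_cst c y f) = bv f"
  by (induction f) auto

lemma fm_consts_subst_cst: "fm_consts (subst_cst c y f) = fm_consts f - {c}"
  by (induction f) (auto simp: trm_case_eqs split: trm.split)

lemma qfree_subst_cst: "qfree f \<Longrightarrow> qfree (subst_cst c y f)"
  by (induction f) auto

lemma subst_cst_Exs: "subst_cst c y (Exs xs f) = Exs xs (subst_cst c y f)"
  by (induction xs) auto

lemma subst_cst_Alls: "subst_cst c y (Alls xs f) = Alls xs (subst_cst c y f)"
  by (induction xs) auto

lemma is_sigma_pi_preserved: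
  assumes "\<And>f. qfree f \<Longrightarrow> qfree (F f)"
    and "\<And>x f. F (Ex x f) = Ex x (F f)" and "\<And>x f. F (All x f) = All x (F f)"
  shows "(is_sigma n f \<longrightarrow> is_sigma n (F f)) \<and> (is_pi n f \<longrightarrow> is_pi n (F f))"
proof (induction n arbitrary: f)
  case 0
  show ?case using assms(1) by simp
next
  case (Suc n)
  have "F (Exs xs g) = Exs xs (F g)" "F (Alls xs g) = Alls xs (F g)" for xs g
    by (induction xs) (simp_all add: assms(2,3))
  with Suc show ?case by (metis is_pi.simps(2) is_sigma.simps(2))
qed

lemma is_sigma_map_fm: "is_sigma n f \<Longrightarrow> is_sigma n (map_fm g f)"
  using is_sigma_pi_preserved[of "map_fm g"] by simp

lemma is_sigma_subst_cst: "is_sigma n f \<Longrightarrow> is_sigma n (subst_cst c y f)"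
  using is_sigma_pi_preserved[of "subst_cst c y", OF qfree_subst_cst] by simp

lemma is_sigma_push: "qfree t \<Longrightarrow> is_sigma n f \<Longrightarrow> is_sigma n (push t f)"
proof -
  assume "qfree t"
  then have "qfree f \<Longrightarrow> qfree (push t f)" for f by (induction t f rule: push.induct) auto
  then show "is_sigma n f \<Longrightarrow> is_sigma n (push t f)"
    using is_sigma_pi_preserved[of "push t"] by simp
qed

section \<open>Eliminating \<open>\<Sigma>\<^sub>2\<close>-definable constants\<close>

definition equiv_fm :: "nat list fm \<Rightarrow> nat list fm \<Rightarrow> bool" where
  "equiv_fm \<psi> \<phi> \<longleftrightarrow> (\<forall>e. partition_env e \<longrightarrow> (sat id e \<psi> \<longleftrightarrow> sat id e \<phi>))"

definition sigma_expressible :: "nat \<Rightarrow> nat list set \<Rightarrow> nat list fm \<Rightarrow> bool" where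
  "sigma_expressible n K \<phi> \<longleftrightarrow>
     (\<exists>\<psi>. is_sigma n \<psi> \<and> fm_consts \<psi> \<subseteq> K \<and> fv \<psi> \<subseteq> fv \<phi> \<and> equiv_fm \<psi> \<phi>)"

lemma sigma_expressible_refl: "is_sigma n \<phi> \<Longrightarrow> fm_consts \<phi> \<subseteq> K \<Longrightarrow> sigma_expressible n K \<phi>"
  unfolding sigma_expressible_def equiv_fm_def by blast

lemma sigma_expressible_trans:
  "sigma_expressible n K \<psi> \<Longrightarrow> fv \<psi> \<subseteq> fv \<phi> \<Longrightarrow> equiv_fm \<psi> \<phi> \<Longrightarrow> sigma_expressible n K \<phi>"
  unfolding sigma_expressible_def equiv_fm_def by (meson order_trans)

text \<open>The constant \<open>p\<close> is defined, using constants from \<open>K\<close>, by a formula \<open>\<exists>\<forall>\<theta>\<close> in the single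
  free variable \<open>N\<close>, for every \<open>N\<close>, with all bound variables above \<open>N\<close>: such a definition can be
  combined with any formula whose variables lie below \<open>N\<close> without capture.\<close>

definition sigma2_definable_elem :: "nat list set \<Rightarrow> nat list \<Rightarrow> bool" where
  "sigma2_definable_elem K p \<longleftrightarrow> (\<forall>N. \<exists>us ws \<theta>. qfree \<theta> \<and> fm_consts \<theta> \<subseteq> K \<and>
      set us \<union> set ws \<subseteq> {N<..} \<and> fv (Exs us (Alls ws \<theta>)) \<subseteq> {N} \<and>
      (\<forall>e. partition_env e \<longrightarrow> (sat id e (Exs us (Alls ws \<theta>)) \<longleftrightarrow> e N = p)))"

text \<open>Replace \<open>p\<close> by the variable \<open>N\<close> and prefix \<open>\<exists>N\<close> together with the definition of \<open>p\<close>;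
  the \<open>\<exists>\<forall>\<close> prefix of the definition merges into the first two blocks.\<close>

lemma eliminate_constant:
  fixes \<phi> :: "nat list fm"
  assumes "is_sigma (Suc (Suc m)) \<phi>" and \<phi>_vars: "fv \<phi> \<union> bv \<phi> \<subseteq> {..<N}"
    and "qfree \<theta>" and \<theta>_bound: "set us \<union> set ws \<subseteq> {N<..}" and \<theta>_free: "fv (Exs us (Alls ws \<theta>)) \<subseteq> {N}"
    and defines_p: "\<forall>e. partition_env e \<longrightarrow> (sat id e (Exs us (Alls ws \<theta>)) \<longleftrightarrow> e N = p)"
    and "p \<in> Partitions"
  shows "sigma_expressible (Suc (Suc m)) (fm_consts \<phi> - {p} \<union> fm_consts \<theta>) \<phi>"
proof -
  obtain xs zs h where \<phi>: "\<phi> = Exs xs (Alls zs h)" and "is_sigma m h"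
    using assms(1) by auto
  define h' where "h' = subst_cst p N h"
  define \<psi> where "\<psi> = Exs (N # us @ xs) (Alls (ws @ zs) (push \<theta> h'))"
  have h_vars: "fv h \<union> bv h \<union> set xs \<union> set zs \<subseteq> {..<N}" using \<phi>_vars \<phi> by auto
  have \<theta>_vars: "fv \<theta> \<subseteq> {N..}" using \<theta>_bound \<theta>_free by fastforce
  have fv_h': "fv h' \<subseteq> insert N (fv h)" unfolding h'_def by (rule fv_subst_cst)
  have "is_sigma m (push \<theta> h')"
    unfolding h'_def using \<open>qfree \<theta>\<close> \<open>is_sigma m h\<close> by (intro is_sigma_push is_sigma_subst_cst)
  then have "is_sigma (Suc (Suc m)) \<psi>"
    unfolding \<psi>_def by (metis Exs_simps(2) is_pi.simps(2) is_sigma.simps(2))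
  moreover have "fm_consts \<psi> \<subseteq> fm_consts \<phi> - {p} \<union> fm_consts \<theta>"
    unfolding \<psi>_def h'_def \<phi> by (auto simp: fm_consts_push fm_consts_subst_cst)
  moreover have "fv \<psi> \<subseteq> fv \<phi>"
    unfolding \<psi>_def \<phi> using fv_push[of \<theta> h'] fv_h' \<theta>_free by auto
  moreover have "sat id e \<psi> \<longleftrightarrow> sat id e \<phi>" if "partition_env e" for e
  proof -
    have "(set us \<union> set ws) \<inter> fv h' = {}" "(set xs \<union> set zs \<union> bv h') \<inter> fv \<theta> = {}"
      using h_vars \<theta>_bound \<theta>_vars fv_h' by (fastforce simp: h'_def)+
    then have "sat id e \<psi> \<longleftrightarrow> (\<exists>q\<in>Partitions. sat id (e(N := q)) (Exs us (Alls ws \<theta>)) \<and>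
        sat id (e(N := q)) (Exs xs (Alls zs h')))"
      unfolding \<psi>_def by (simp add: sat_prenex_Conj)
    also have "\<dots> \<longleftrightarrow> sat id (e(N := p)) (subst_cst p N \<phi>)"
      using defines_p that \<open>p \<in> Partitions\<close> by (auto simp: \<phi> h'_def subst_cst_Exs subst_cst_Alls)
    also have "\<dots> \<longleftrightarrow> sat id (e(N := p)) \<phi>"
      by (rule sat_subst_cst) (use \<phi>_vars in auto)
    also have "\<dots> \<longleftrightarrow> sat id e \<phi>"
      by (rule sat_cong) (use \<phi>_vars in auto)
    finally show ?thesis .
  qed
  ultimately show ?thesis
    unfolding sigma_expressible_def equiv_fm_def by blast
qed

lemma sigma_expressible_mono:
  "sigma_expressible n K \<phi> \<Longrightarrow> K \<subseteq> K' \<Longrightarrow> sigma_expressible n K' \<phi>"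
  unfolding sigma_expressible_def by blast

lemma sigma_expressible_eliminate_one:
  assumes "is_sigma (Suc (Suc m)) \<phi>" and "p \<in> Partitions" and "sigma2_definable_elem K p"
  shows "sigma_expressible (Suc (Suc m)) (fm_consts \<phi> - {p} \<union> K) \<phi>"
proof -
  define N where "N = Suc (Max (fv \<phi> \<union> bv \<phi>))"
  have \<phi>_vars: "fv \<phi> \<union> bv \<phi> \<subseteq> {..<N}"
    using Max_ge[of "fv \<phi> \<union> bv \<phi>"] by (auto simp: N_def less_Suc_eq_le finite_fv finite_bv)
  obtain us ws \<theta> where \<theta>: "qfree \<theta>" "fm_consts \<theta> \<subseteq> K" "set us \<union> set ws \<subseteq> {N<..}"
    "fv (Exs us (Alls ws \<theta>)) \<subseteq> {N}"
    "\<forall>e. partition_env e \<longrightarrow> (sat id e (Exs us (Alls ws \<theta>)) \<longleftrightarrow> e N = p)"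
    using assms(3) unfolding sigma2_definable_elem_def by metis
  have "sigma_expressible (Suc (Suc m)) (fm_consts \<phi> - {p} \<union> fm_consts \<theta>) \<phi>"
    by (rule eliminate_constant[OF assms(1) \<phi>_vars \<theta>(1,3-5) assms(2)])
  then show ?thesis
    by (rule sigma_expressible_mono) (use \<theta>(2) in blast)
qed

lemma sigma_expressible_eliminate:
  assumes "sigma_expressible (Suc (Suc m)) K' \<phi>" and "K' \<subseteq> K \<union> Q" and "Q \<subseteq> Partitions"
    and definable: "\<forall>p\<in>Q. sigma2_definable_elem K p"
  shows "sigma_expressible (Suc (Suc m)) K \<phi>"
proof -
  have "sigma_expressible (Suc (Suc m)) K \<psi>"
    if "is_sigma (Suc (Suc m)) \<psi>" "fm_consts \<psi> \<subseteq> K \<union> Q" for \<psi>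
    using that
  proof (induction "card (fm_consts \<psi> - K)" arbitrary: \<psi> rule: less_induct)
    case less
    show ?case
    proof (cases "fm_consts \<psi> \<subseteq> K")
      case True
      with less.prems(1) show ?thesis by (rule sigma_expressible_refl)
    next
      case False
      then obtain p where p: "p \<in> fm_consts \<psi>" "p \<notin> K" by blast
      with less.prems(2) assms(3) definable have "p \<in> Partitions" "sigma2_definable_elem K p"
        by blast+
      then obtain \<psi>' where \<psi>': "is_sigma (Suc (Suc m)) \<psi>'" "fm_consts \<psi>' \<subseteq> fm_consts \<psi> - {p} \<union> K"
        "fv \<psi>' \<subseteq> fv \<psi>" "equiv_fm \<psi>' \<psi>"
        using sigma_expressible_eliminate_one[OF less.prems(1)] unfolding sigma_expressible_def by blast
      have "fm_consts \<psi>' - K \<subset> fm_consts \<psi> - K"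
        using \<psi>'(2) p by blast
      then have "card (fm_consts \<psi>' - K) < card (fm_consts \<psi> - K)"
        by (intro psubset_card_mono) (simp add: finite_fm_consts)
      moreover have "fm_consts \<psi>' \<subseteq> K \<union> Q"
        using \<psi>'(2) less.prems(2) by blast
      ultimately have "sigma_expressible (Suc (Suc m)) K \<psi>'"
        by (rule less.hyps[OF _ \<psi>'(1)])
      then show ?thesis using \<psi>'(3,4) by (rule sigma_expressible_trans)
    qed
  qed
  moreover obtain \<psi> where "is_sigma (Suc (Suc m)) \<psi>" "fm_consts \<psi> \<subseteq> K'" "fv \<psi> \<subseteq> fv \<phi>" "equiv_fm \<psi> \<phi>"
    using assms(1) unfolding sigma_expressible_def by blast
  ultimately show ?thesis
    using assms(2) sigma_expressible_trans by blast
qed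

section \<open>Young's lattice\<close>

lemma young_le_refl: "young_le x x"
  by (simp add: young_le_def)

lemma young_le_antisym: "young_le x y \<Longrightarrow> young_le y x \<Longrightarrow> x = y"
  unfolding young_le_def by (auto intro!: nth_equalityI simp: le_antisym)

lemma young_le_ext:
  assumes "x \<in> Partitions" "y \<in> Partitions" "\<forall>w\<in>Partitions. young_le w x \<longleftrightarrow> young_le w y"
  shows "x = y"
  using assms young_le_refl young_le_antisym by blast

lemma partition_nth_mono: "is_partition w \<Longrightarrow> i \<le> j \<Longrightarrow> j < length w \<Longrightarrow> w ! j \<le> w ! i"
  unfolding is_partition_def using sorted_wrt_nth_less[of "(\<ge>)" w i j] by (cases "i = j") auto

lemma partition_nth_pos: "is_partition w \<Longrightarrow> i < length w \<Longrightarrow> 0 < w ! i"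
  unfolding is_partition_def by auto

lemma replicate_in_Partitions: "0 < a \<Longrightarrow> replicate b a \<in> Partitions"
  by (simp add: Partitions_def is_partition_def sorted_wrt_iff_nth_less)

lemma young_le_replicate:
  assumes "is_partition w"
  shows "young_le (replicate b a) w \<longleftrightarrow> b = 0 \<or> b \<le> length w \<and> a \<le> w ! (b - 1)"
proof -
  have "(\<forall>i<b. a \<le> w ! i) \<longleftrightarrow> a \<le> w ! (b - 1)" if "0 < b" "b \<le> length w"
    using partition_nth_mono[OF assms, of _ "b - 1"] that
    by (auto intro: order_trans)
  then show ?thesis by (cases "b = 0") (auto simp: young_le_def)
qed

lemma young_le_iff_avoids_rectangles:
  assumes "is_partition w"
  shows "young_le w p \<longleftrightarrow>
    (\<forall>i<length p. \<not> young_le (replicate (Suc i) (Suc (p ! i))) w) \<and>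
    \<not> young_le (replicate (Suc (length p)) 1) w"
proof -
  have "\<not> young_le (replicate (Suc i) (Suc (p ! i))) w \<longleftrightarrow> (i < length w \<longrightarrow> w ! i \<le> p ! i)" for i
    using young_le_replicate[OF assms, of "Suc i" "Suc (p ! i)"] by auto
  moreover have "\<not> young_le (replicate (Suc (length p)) 1) w \<longleftrightarrow> length w \<le> length p"
    using young_le_replicate[OF assms, of "Suc (length p)" 1] partition_nth_pos[OF assms, of "length p"]
    by (cases "length p < length w") auto
  ultimately show ?thesis by (auto simp: young_le_def)
qed

lemma young_le_rectangle_iff:
  assumes "is_partition w"
  shows "young_le w (replicate b a) \<longleftrightarrow>
    \<not> young_le [Suc a] w \<and> \<not> young_le (replicate (Suc b) 1) w"
proof -
  have "\<not> young_le [Suc a] w \<longleftrightarrow> (\<forall>i<length w. w ! i \<le> a)"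
    using young_le_replicate[OF assms, of 1 "Suc a"] partition_nth_mono[OF assms, of 0]
    by (cases w) (auto simp: not_less_eq_eq intro: order_trans)
  moreover have "\<not> young_le (replicate (Suc b) 1) w \<longleftrightarrow> length w \<le> b"
    using young_le_replicate[OF assms, of "Suc b" 1] partition_nth_pos[OF assms, of b]
    by (cases "b < length w") auto
  ultimately show ?thesis by (auto simp: young_le_def)
qed

definition ideal :: "nat list \<Rightarrow> nat list set" where
  "ideal y = {w \<in> Partitions. young_le w y}"

lemma exists_bij_betw_ideal_iff:
  assumes "inj f" and ideal_f: "\<And>k. ideal (f k) = f ` {..k}"
  shows "(\<exists>g. bij_betw g {..<n} (ideal (f k))) \<longleftrightarrow> n = Suc k"
proof
  assume "\<exists>g. bij_betw g {..<n} (ideal (f k))"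
  then have "card {..<n} = card (f ` {..k})"
    using ideal_f bij_betw_same_card by metis
  then show "n = Suc k"
    using inj_on_subset[OF \<open>inj f\<close>] by (simp add: card_image)
next
  assume "n = Suc k"
  then have "bij_betw f {..<n} (ideal (f k))"
    using inj_on_subset[OF \<open>inj f\<close>] ideal_f by (simp add: bij_betw_def lessThan_Suc_atMost)
  then show "\<exists>g. bij_betw g {..<n} (ideal (f k))" by blast
qed

definition row :: "nat \<Rightarrow> nat list" where
  "row k = (if k = 0 then [] else [k])"

definition col :: "nat \<Rightarrow> nat list" where
  "col k = replicate k 1"

lemma inj_row: "inj row"
  by (auto simp: inj_def row_def split: if_splits)

lemma inj_col: "inj col"
  by (auto simp: inj_def col_def)

lemma row_in_Partitions: "row k \<in> Partitions"
  by (simp add: row_def Partitions_def is_partition_def)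

lemma col_in_Partitions: "col k \<in> Partitions"
  by (simp add: col_def replicate_in_Partitions)

lemma length_le_1_iff_row:
  "y \<in> Partitions \<Longrightarrow> length y \<le> 1 \<longleftrightarrow> (\<exists>k. y = row k)"
  by (cases y) (auto simp: row_def Partitions_def is_partition_def)

lemma ideal_row: "ideal (row k) = row ` {..k}"
proof (intro equalityI subsetI)
  fix w assume "w \<in> ideal (row k)"
  then have w: "w \<in> Partitions" "young_le w (row k)" by (auto simp: ideal_def)
  then have "length w \<le> 1" by (auto simp: young_le_def row_def split: if_splits)
  then obtain j where j: "w = row j" using length_le_1_iff_row w(1) by blast
  with w(2) have "j \<le> k" by (auto simp: young_le_def row_def split: if_splits)
  with j show "w \<in> row ` {..k}" by blast
next
  fix w assume "w \<in> row ` {..k}"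
  then obtain j where "j \<le> k" "w = row j" by blast
  then show "w \<in> ideal (row k)"
    using row_in_Partitions by (auto simp: ideal_def young_le_def row_def)
qed

lemma ideal_col: "ideal (col k) = col ` {..k}"
proof (intro equalityI subsetI)
  fix w assume "w \<in> ideal (col k)"
  then have w: "is_partition w" "young_le w (col k)" by (auto simp: ideal_def Partitions_def)
  have "\<forall>x\<in>set w. x = 1"
    using w partition_nth_pos[OF w(1)] by (fastforce simp: young_le_def col_def in_set_conv_nth)
  then have "w = col (length w)" by (simp add: col_def replicate_length_same)
  moreover have "length w \<le> k" using w(2) by (simp add: young_le_def col_def)
  ultimately show "w \<in> col ` {..k}" by auto
next
  fix w assume "w \<in> col ` {..k}"
  then obtain j where "j \<le> k" "w = col j" by blast
  then show "w \<in> ideal (col k)"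
    using col_in_Partitions by (auto simp: ideal_def young_le_def col_def)
qed

lemma not_young_le_11_iff_row:
  assumes "y \<in> Partitions"
  shows "\<not> young_le [1, 1] y \<longleftrightarrow> (\<exists>k. y = row k)"
proof -
  have y: "is_partition y" using assms by (simp add: Partitions_def)
  have "young_le (replicate 2 1) y \<longleftrightarrow> 2 \<le> length y"
    using young_le_replicate[OF y, of 2 1] partition_nth_pos[OF y, of 1] by auto
  then show ?thesis
    using length_le_1_iff_row[OF assms] by (simp add: numeral_2_eq_2 not_less_eq_eq)
qed

lemma not_young_le_2_iff_col:
  assumes "y \<in> Partitions"
  shows "\<not> young_le [2] y \<longleftrightarrow> (\<exists>k. y = col k)"
proof
  have y: "is_partition y" using assms by (simp add: Partitions_def)
  assume "\<not> young_le [2] y"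
  then have "y = [] \<or> y ! 0 < 2"
    using young_le_replicate[OF y, of 1 2] by (cases y) auto
  then have "\<forall>x\<in>set y. x = 1"
    using partition_nth_mono[OF y, of 0] partition_nth_pos[OF y]
    by (fastforce simp: in_set_conv_nth)
  then show "\<exists>k. y = col k"
    by (metis col_def replicate_length_same)
next
  assume "\<exists>k. y = col k"
  then show "\<not> young_le [2] y" by (auto simp: young_le_def col_def)
qed

lemma chain_member_iff_card_ideal:
  assumes "inj f" and "\<And>k. ideal (f k) = f ` {..k}"
    and in_chain: "\<And>y. y \<in> Partitions \<Longrightarrow> \<not> young_le q y \<longleftrightarrow> (\<exists>k. y = f k)"
  shows "\<forall>y\<in>Partitions. (\<not> young_le q y \<and> (\<exists>g. bij_betw g {..<Suc m} (ideal y))) \<longleftrightarrow> y = f m"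
  using in_chain exists_bij_betw_ideal_iff[OF assms(1,2)] by (metis nat.inject)

section \<open>\<open>\<Sigma>\<^sub>2\<close>-definitions of partitions\<close>

text \<open>The language has no truth constants; \<open>x = x\<close> and \<open>\<not> x = x\<close> for a variable \<open>x\<close> stand in
  for them.\<close>

definition conj_list :: "nat \<Rightarrow> 'c fm list \<Rightarrow> 'c fm" where
  "conj_list x fs = foldr Conj fs (Eq (Var x) (Var x))"

definition disj_list :: "nat \<Rightarrow> 'c fm list \<Rightarrow> 'c fm" where
  "disj_list x fs = foldr Disj fs (Neg (Eq (Var x) (Var x)))"

definition Iff :: "'c fm \<Rightarrow> 'c fm \<Rightarrow> 'c fm" where
  "Iff f g = Conj (Disj (Neg f) g) (Disj f (Neg g))"

lemma sat_conj_list [simp]: "sat I e (conj_list x fs) \<longleftrightarrow> (\<forall>f\<in>set fs. sat I e f)"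
  by (induction fs) (auto simp: conj_list_def)

lemma sat_disj_list [simp]: "sat I e (disj_list x fs) \<longleftrightarrow> (\<exists>f\<in>set fs. sat I e f)"
  by (induction fs) (auto simp: disj_list_def)

lemma fv_conj_list [simp]: "fv (conj_list x fs) = insert x (\<Union>f\<in>set fs. fv f)"
  by (induction fs) (auto simp: conj_list_def)

lemma fv_disj_list [simp]: "fv (disj_list x fs) = insert x (\<Union>f\<in>set fs. fv f)"
  by (induction fs) (auto simp: disj_list_def)

lemma fm_consts_conj_list [simp]: "fm_consts (conj_list x fs) = (\<Union>f\<in>set fs. fm_consts f)"
  by (induction fs) (auto simp: conj_list_def)

lemma fm_consts_disj_list [simp]: "fm_consts (disj_list x fs) = (\<Union>f\<in>set fs. fm_consts f)"
  by (induction fs) (auto simp: disj_list_def)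

lemma qfree_conj_list [simp]: "qfree (conj_list x fs) \<longleftrightarrow> (\<forall>f\<in>set fs. qfree f)"
  by (induction fs) (auto simp: conj_list_def)

lemma qfree_disj_list [simp]: "qfree (disj_list x fs) \<longleftrightarrow> (\<forall>f\<in>set fs. qfree f)"
  by (induction fs) (auto simp: disj_list_def)

lemma Iff_simps [simp]:
  "sat I e (Iff f g) \<longleftrightarrow> (sat I e f \<longleftrightarrow> sat I e g)"
  "fv (Iff f g) = fv f \<union> fv g"
  "fm_consts (Iff f g) = fm_consts f \<union> fm_consts g"
  "qfree (Iff f g) \<longleftrightarrow> qfree f \<and> qfree g"
  by (auto simp: Iff_def)

lemma sigma2_definable_elem_by_avoidance:
  assumes "set ts \<subseteq> K" and "p \<in> Partitions"
    and ideal_p: "\<forall>w\<in>Partitions. young_le w p \<longleftrightarrow> (\<forall>t\<in>set ts. \<not> young_le t w)"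
  shows "sigma2_definable_elem K p"
  unfolding sigma2_definable_elem_def
proof
  fix N
  define \<theta> where "\<theta> = Iff (Le (Var (Suc N)) (Var N)) (conj_list N [Neg (Le (Cst t) (Var (Suc N))). t \<leftarrow> ts])"
  have "sat id e (Alls [Suc N] \<theta>) \<longleftrightarrow> e N = p" if "partition_env e" for e
  proof -
    have "sat id e (Alls [Suc N] \<theta>) \<longleftrightarrow>
        (\<forall>w\<in>Partitions. young_le w (e N) \<longleftrightarrow> (\<forall>t\<in>set ts. \<not> young_le t w))"
      by (simp add: \<theta>_def)
    also have "\<dots> \<longleftrightarrow> e N = p"
      using ideal_p young_le_ext[OF that[rule_format] \<open>p \<in> Partitions\<close>] by auto
    finally show ?thesis .
  qed
  moreover have "qfree \<theta>" "fm_consts \<theta> \<subseteq> K" "fv (Alls [Suc N] \<theta>) \<subseteq> {N}"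
    using assms(1) by (auto simp: \<theta>_def)
  ultimately show "\<exists>us ws \<theta>. qfree \<theta> \<and> fm_consts \<theta> \<subseteq> K \<and> set us \<union> set ws \<subseteq> {N<..} \<and>
      fv (Exs us (Alls ws \<theta>)) \<subseteq> {N} \<and>
      (\<forall>e. partition_env e \<longrightarrow> (sat id e (Exs us (Alls ws \<theta>)) \<longleftrightarrow> e N = p))"
    by (intro exI[of _ "[]"] exI[of _ "[Suc N]"] exI[of _ \<theta>]) auto
qed

text \<open>With \<open>x = N\<close>, \<open>z\<^sub>j = N + 1 + j\<close> for \<open>j < k\<close> and \<open>w = N + 1 + k\<close>, this says: the \<open>z\<^sub>j\<close> are
  distinct and below \<open>x\<close>, \<open>w \<le> x\<close> only if \<open>w\<close> is some \<open>z\<^sub>j\<close>, and \<open>q \<not>\<le> x\<close>.\<close>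

definition ideal_size_matrix :: "nat \<Rightarrow> nat \<Rightarrow> 'c \<Rightarrow> 'c fm" where
  "ideal_size_matrix N k q = conj_list N
     ([Neg (Eq (Var (Suc N + i)) (Var (Suc N + j))). i \<leftarrow> [0..<k], j \<leftarrow> [0..<k], i \<noteq> j] @
      [Le (Var (Suc N + j)) (Var N). j \<leftarrow> [0..<k]] @
      [Disj (Neg (Le (Var (Suc N + k)) (Var N)))
         (disj_list N [Eq (Var (Suc N + k)) (Var (Suc N + j)). j \<leftarrow> [0..<k]]),
       Neg (Le (Cst q) (Var N))])"

lemma sat_ideal_size_matrix:
  "sat I ((\<lambda>i. if Suc N \<le> i \<and> i < Suc N + k then g (i - Suc N) else e i)(Suc N + k := w))
      (ideal_size_matrix N k q) \<longleftrightarrow>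
    inj_on g {..<k} \<and> (\<forall>j<k. young_le (g j) (e N)) \<and> (young_le w (e N) \<longrightarrow> w \<in> g ` {..<k}) \<and>
    \<not> young_le (I q) (e N)"
  by (simp add: ideal_size_matrix_def ball_Un ball_UN inj_on_def) (fastforce dest: ball_imageD)

lemma sigma2_definable_elem_by_counting:
  fixes k :: nat
  assumes "q \<in> K"
    and unique: "\<forall>y\<in>Partitions. (\<not> young_le q y \<and> (\<exists>g. bij_betw g {..<k} (ideal y))) \<longleftrightarrow> y = p"
  shows "sigma2_definable_elem K p"
  unfolding sigma2_definable_elem_def
proof
  fix N
  define us where "us = [Suc N..<Suc N + k]"
  define \<theta> where "\<theta> = ideal_size_matrix N k q"
  have "sat id e (Exs us (Alls [Suc N + k] \<theta>)) \<longleftrightarrow> e N = p" if "partition_env e" for e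
  proof -
    have "sat id e (Exs us (Alls [Suc N + k] \<theta>)) \<longleftrightarrow>
        (\<exists>g. (\<forall>j<k. g j \<in> Partitions) \<and> inj_on g {..<k} \<and> (\<forall>j<k. young_le (g j) (e N)) \<and>
             (\<forall>w\<in>Partitions. young_le w (e N) \<longrightarrow> w \<in> g ` {..<k})) \<and> \<not> young_le q (e N)"
      unfolding us_def \<theta>_def sat_Exs_upt Alls_simps sat.simps(7) sat_ideal_size_matrix
      using Nil_in_Partitions by auto
    also have "\<dots> \<longleftrightarrow> (\<exists>g. bij_betw g {..<k} (ideal (e N))) \<and> \<not> young_le q (e N)"
      unfolding bij_betw_def ideal_def by blast
    also have "\<dots> \<longleftrightarrow> e N = p"
      using unique that by blast
    finally show ?thesis .
  qed
  moreover have "qfree \<theta>" "fm_consts \<theta> \<subseteq> K" "set us \<union> set [Suc N + k] \<subseteq> {N<..}"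
    "fv (Exs us (Alls [Suc N + k] \<theta>)) \<subseteq> {N}"
    using \<open>q \<in> K\<close> by (auto simp: \<theta>_def us_def ideal_size_matrix_def)
  ultimately show "\<exists>us ws \<theta>. qfree \<theta> \<and> fm_consts \<theta> \<subseteq> K \<and> set us \<union> set ws \<subseteq> {N<..} \<and>
      fv (Exs us (Alls ws \<theta>)) \<subseteq> {N} \<and>
      (\<forall>e. partition_env e \<longrightarrow> (sat id e (Exs us (Alls ws \<theta>)) \<longleftrightarrow> e N = p))"
    by blast
qed

definition Rows :: "nat list set" where
  "Rows = range row"

definition Cols :: "nat list set" where
  "Cols = range col"

definition Rects :: "nat list set" where
  "Rects = {replicate b (Suc a) | a b. True}"

lemma sigma2_definable_row: "sigma2_definable_elem {[1, 1]} (row m)"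
  by (rule sigma2_definable_elem_by_counting[of "[1, 1]" _ "Suc m"], simp,
      rule chain_member_iff_card_ideal[OF inj_row ideal_row not_young_le_11_iff_row])

lemma sigma2_definable_col: "sigma2_definable_elem Rows (col m)"
proof (rule sigma2_definable_elem_by_counting[of "[2]" _ "Suc m"])
  have "[2] = row 2" by (simp add: row_def)
  then show "[2] \<in> Rows" unfolding Rows_def by blast
qed (rule chain_member_iff_card_ideal[OF inj_col ideal_col not_young_le_2_iff_col])

lemma sigma2_definable_rect: "sigma2_definable_elem (Rows \<union> Cols) (replicate b (Suc a))"
proof (rule sigma2_definable_elem_by_avoidance[of "[row (Suc (Suc a)), col (Suc b)]"])
  show "set [row (Suc (Suc a)), col (Suc b)] \<subseteq> Rows \<union> Cols"
    by (simp add: Rows_def Cols_def)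
  show "replicate b (Suc a) \<in> Partitions"
    by (simp add: replicate_in_Partitions)
  show "\<forall>w\<in>Partitions. young_le w (replicate b (Suc a)) \<longleftrightarrow>
      (\<forall>t\<in>set [row (Suc (Suc a)), col (Suc b)]. \<not> young_le t w)"
    by (simp add: Partitions_def young_le_rectangle_iff row_def col_def)
qed

lemma sigma2_definable_partition:
  assumes "p \<in> Partitions"
  shows "sigma2_definable_elem Rects p"
proof (rule sigma2_definable_elem_by_avoidance)
  let ?ts = "[replicate (Suc i) (Suc (p ! i)). i \<leftarrow> [0..<length p]] @ [replicate (Suc (length p)) 1]"
  show "set ?ts \<subseteq> Rects"
    by (auto simp: Rects_def simp del: replicate.simps)
  show "\<forall>w\<in>Partitions. young_le w p \<longleftrightarrow> (\<forall>t\<in>set ?ts. \<not> young_le t w)"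
    by (auto simp: Partitions_def young_le_iff_avoids_rectangles)
qed (fact assms)

section \<open>Reduction to the constant \<open>(1,1)\<close>\<close>

lemma sigma_expressible_over_11:
  assumes "is_sigma (Suc (Suc m)) \<phi>" and "fm_consts \<phi> \<subseteq> Partitions"
  shows "sigma_expressible (Suc (Suc m)) {[1, 1]} \<phi>"
proof -
  have Rects: "Rects \<subseteq> Partitions"
    by (auto simp: Rects_def replicate_in_Partitions)
  have Cols: "Cols \<subseteq> Partitions" and Rows: "Rows \<subseteq> Partitions"
    by (auto simp: Cols_def Rows_def col_in_Partitions row_in_Partitions)
  have "sigma_expressible (Suc (Suc m)) Partitions \<phi>"
    using assms by (rule sigma_expressible_refl)
  then have "sigma_expressible (Suc (Suc m)) Rects \<phi>"
    by (rule sigma_expressible_eliminate[where Q = Partitions]) (use sigma2_definable_partition in auto)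
  then have "sigma_expressible (Suc (Suc m)) (Rows \<union> Cols) \<phi>"
    by (rule sigma_expressible_eliminate[where Q = Rects, OF _ _ Rects])
      (use sigma2_definable_rect in \<open>auto simp: Rects_def\<close>)
  then have "sigma_expressible (Suc (Suc m)) Rows \<phi>"
    by (rule sigma_expressible_eliminate[where Q = Cols, OF _ _ Cols])
      (use sigma2_definable_col in \<open>auto simp: Cols_def\<close>)
  then show ?thesis
    by (rule sigma_expressible_eliminate[where Q = Rows, OF _ _ Rows])
      (use sigma2_definable_row in \<open>auto simp: Rows_def\<close>)
qed

lemma sigma_definable_mono: "sigma_definable I C n k R \<Longrightarrow> C \<subseteq> C' \<Longrightarrow> sigma_definable I C' n k R"
  unfolding sigma_definable_def by blast

lemma sigma_definable_interpret_consts: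
  assumes "sigma_definable I C n k R"
  shows "sigma_definable id (I ` C) n k R"
proof -
  obtain \<phi> where "is_sigma n \<phi>" "fm_consts \<phi> \<subseteq> C" "fv \<phi> \<subseteq> {..<k}"
    "\<forall>e. partition_env e \<longrightarrow> (sat I e \<phi> \<longleftrightarrow> map e [0..<k] \<in> R)"
    using assms unfolding sigma_definable_def by blast
  then show ?thesis
    unfolding sigma_definable_def using is_sigma_map_fm
    by (intro exI[of _ "map_fm I \<phi>"]) (auto simp: sat_map_fm)
qed

lemma sigma_definable_Ystar_if_sigma_definable:
  assumes "sigma_definable id Partitions (Suc (Suc m)) k R"
  shows "sigma_definable I_Ystar UNIV (Suc (Suc m)) k R"
proof -
  obtain \<phi> where \<phi>: "is_sigma (Suc (Suc m)) \<phi>" "fm_consts \<phi> \<subseteq> Partitions" "fv \<phi> \<subseteq> {..<k}"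
    "\<forall>e. partition_env e \<longrightarrow> (sat id e \<phi> \<longleftrightarrow> map e [0..<k] \<in> R)"
    using assms unfolding sigma_definable_def by blast
  obtain \<psi> where \<psi>: "is_sigma (Suc (Suc m)) \<psi>" "fm_consts \<psi> \<subseteq> {[1, 1]}" "fv \<psi> \<subseteq> fv \<phi>"
    "equiv_fm \<psi> \<phi>"
    using sigma_expressible_over_11[OF \<phi>(1,2)] unfolding sigma_expressible_def by blast
  have "sat I_Ystar e (map_fm (\<lambda>_. ()) \<psi>) \<longleftrightarrow> sat id e \<psi>" for e
    unfolding sat_map_fm using \<psi>(2) by (intro sat_consts_cong) (auto simp: I_Ystar_def)
  then show ?thesis
    unfolding sigma_definable_def using \<phi>(3,4) \<psi>(3,4) is_sigma_map_fm[OF \<psi>(1)] by (intro exI[of _ "map_fm (\<lambda>_. ()) \<psi>"]) (auto simp: equiv_fm_def)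
qed

theorem corollary5p2:
  fixes n k :: nat and R :: "nat list list set"
  assumes "n \<ge> 4"
    and "R \<subseteq> {xs. length xs = k \<and> set xs \<subseteq> Partitions}"
  shows "sigma_definable I_Ystar UNIV n k R \<longleftrightarrow> sigma_definable id Partitions n k R"
proof
  assume "sigma_definable I_Ystar UNIV n k R"
  then have "sigma_definable id (range I_Ystar) n k R"
    by (rule sigma_definable_interpret_consts)
  moreover have "range I_Ystar \<subseteq> Partitions"
    using replicate_in_Partitions[of 1 2] by (auto simp: I_Ystar_def numeral_2_eq_2)
  ultimately show "sigma_definable id Partitions n k R"
    by (rule sigma_definable_mono)
next
  assume "sigma_definable id Partitions n k R"
  moreover have "n = Suc (Suc (n - 2))"
    using \<open>n \<ge> 4\<close> by arith
  ultimately show "sigma_definable I_Ystar UNIV n k R"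
    by (metis sigma_definable_Ystar_if_sigma_definable)
qed

end
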